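(* Let $n\ge 2$. No smooth Frobenius nonclassical hypersurface $X\subset\mathbb{P}^n$ over $\mathbb{F}_q$ of degree $q+2$ has separated variables.
   Context: A hypersurface $X=\{F=0\}\subset\mathbb{P}^n$ over $\mathbb{F}_q$ ($F$ homogeneous) is Frobenius nonclassical if $F$ divides $\sum_{i=0}^n x_i^q\frac{\partial F}{\partial x_i}$. $X$ has separated variables if, after a projective linear change of coordinates over $\mathbb{F}_q$, $F=G(x_0,\dots,x_m)+H(x_{m+1},\dots,x_n)$ for some $m\in\{0,\dots,n-1\}$. *)

theory Defs
  imports "HOL-Library.Poly_Mapping" "HOL-Algebra.Algebraic_Closure_Type"
begin

text \<open>Multivariate polynomials over 'k in the variables x_0, x_1, ...:
  finitely supported maps from monomials (exponent vectors) to coefficients.\<close>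
type_synonym 'k mpoly = "(nat \<Rightarrow>\<^sub>0 nat) \<Rightarrow>\<^sub>0 'k"

definition mp_const :: "'k::zero \<Rightarrow> 'k mpoly" where
  "mp_const c = Poly_Mapping.single 0 c"

definition mp_var :: "nat \<Rightarrow> 'k::{zero,one} mpoly" where
  "mp_var i = Poly_Mapping.single (Poly_Mapping.single i 1) 1"

definition mon_deg :: "(nat \<Rightarrow>\<^sub>0 nat) \<Rightarrow> nat" where
  "mon_deg m = (\<Sum>i\<in>Poly_Mapping.keys m. Poly_Mapping.lookup m i)"

definition vars_in :: "nat set \<Rightarrow> 'k::zero mpoly \<Rightarrow> bool" where
  "vars_in V F \<longleftrightarrow> (\<forall>m\<in>Poly_Mapping.keys F. Poly_Mapping.keys m \<subseteq> V)"

definition homogeneous :: "nat \<Rightarrow> 'k::zero mpoly \<Rightarrow> bool" where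
  "homogeneous d F \<longleftrightarrow> (\<forall>m\<in>Poly_Mapping.keys F. mon_deg m = d)"

definition mp_pderiv :: "nat \<Rightarrow> 'k::comm_ring_1 mpoly \<Rightarrow> 'k mpoly" where
  "mp_pderiv i F = (\<Sum>m\<in>Poly_Mapping.keys F.
      Poly_Mapping.single (m - Poly_Mapping.single i 1) (of_nat (Poly_Mapping.lookup m i) * Poly_Mapping.lookup F m))"

definition mp_eval :: "('k::zero \<Rightarrow> 'b::comm_ring_1) \<Rightarrow> (nat \<Rightarrow> 'b) \<Rightarrow> 'k mpoly \<Rightarrow> 'b" where
  "mp_eval h x F = (\<Sum>m\<in>Poly_Mapping.keys F. h (Poly_Mapping.lookup F m) * (\<Prod>i\<in>Poly_Mapping.keys m. x i ^ Poly_Mapping.lookup m i))"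

definition mp_subst :: "(nat \<Rightarrow> 'k::comm_ring_1 mpoly) \<Rightarrow> 'k mpoly \<Rightarrow> 'k mpoly" where
  "mp_subst \<sigma> F = (\<Sum>m\<in>Poly_Mapping.keys F. mp_const (Poly_Mapping.lookup F m) * (\<Prod>i\<in>Poly_Mapping.keys m. \<sigma> i ^ Poly_Mapping.lookup m i))"

definition frobenius_nonclassical :: "nat \<Rightarrow> 'k::{finite,field} mpoly \<Rightarrow> bool" where
  "frobenius_nonclassical n F \<longleftrightarrow>
     F dvd (\<Sum>i\<le>n. mp_var i ^ card (UNIV :: 'k set) * mp_pderiv i F)"

definition smooth_hypersurface :: "nat \<Rightarrow> 'k::field mpoly \<Rightarrow> bool" where
  "smooth_hypersurface n F \<longleftrightarrow>
     (\<forall>x :: nat \<Rightarrow> 'k alg_closure. (\<exists>i\<le>n. x i \<noteq> 0) \<longrightarrow>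
        \<not> (mp_eval to_ac x F = 0 \<and> (\<forall>i\<le>n. mp_eval to_ac x (mp_pderiv i F) = 0)))"

definition invertible_mat :: "nat \<Rightarrow> (nat \<Rightarrow> nat \<Rightarrow> 'k::field) \<Rightarrow> bool" where
  "invertible_mat n A \<longleftrightarrow> (\<exists>B. \<forall>i\<le>n. \<forall>k\<le>n.
      (\<Sum>j\<le>n. A i j * B j k) = (if i = k then 1 else 0))"

definition lin_change :: "nat \<Rightarrow> (nat \<Rightarrow> nat \<Rightarrow> 'k::field) \<Rightarrow> 'k mpoly \<Rightarrow> 'k mpoly" where
  "lin_change n A F = mp_subst (\<lambda>i. \<Sum>j\<le>n. mp_const (A i j) * mp_var j) F"

definition separated_variables :: "nat \<Rightarrow> 'k::field mpoly \<Rightarrow> bool" where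
  "separated_variables n F \<longleftrightarrow>
     (\<exists>A m G H. invertible_mat n A \<and> m < n \<and>
        vars_in {..m} G \<and> vars_in {m<..n} H \<and> lin_change n A F = G + H)"

end

theory Submission
  imports Defs "Jordan_Normal_Form.Determinant" "HOL-Library.Cardinality"
begin

text \<open>
  After the coordinate change, \<open>F = G(x\<^sub>0, ..., x\<^sub>m) + H(x\<^sub>m\<^sub>+\<^sub>1, ..., x\<^sub>n)\<close>, so every
  monomial of \<open>F\<close>, of its partial derivatives and of the Frobenius form
  \<open>T = \<Sum>\<^sub>i x\<^sub>i\<^sup>q \<partial>\<^sub>i F\<close> is pure in one of the two groups of variables; homogeneity,
  Frobenius nonclassicality and singular points are transported along the coordinate change.
  Write \<open>T = F L\<close>. If \<open>G\<close> and \<open>H\<close> are both nonzero, the coefficients of the mixed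
  monomials of \<open>F L\<close> show that \<open>L\<close> has no pure monomial of degree \<open>q - 1\<close>, and then the
  coefficients of \<open>x\<^sub>i\<^sup>2\<^sup>q x\<^sub>j\<close> show that \<open>F\<close> has no monomial \<open>x\<^sub>i\<^sup>q\<^sup>+\<^sup>1 x\<^sub>j\<close>.
  So on the line where all coordinates but \<open>x\<^sub>0, x\<^sub>n\<close> vanish every \<open>\<partial>\<^sub>j F\<close> vanishes,
  while \<open>F\<close> restricts to the binary form \<open>a s\<^sup>q\<^sup>+\<^sup>2 + b t\<^sup>q\<^sup>+\<^sup>2\<close>, which has a nontrivial zero
  over the algebraic closure. If \<open>G = 0\<close> or \<open>H = 0\<close>, a coordinate point of that line is
  trivially singular.
\<close>

abbreviation lookup :: "('a \<Rightarrow>\<^sub>0 'b::zero) \<Rightarrow> 'a \<Rightarrow> 'b" where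
  "lookup \<equiv> Poly_Mapping.lookup"
abbreviation keys :: "('a \<Rightarrow>\<^sub>0 'b::zero) \<Rightarrow> 'a set" where
  "keys \<equiv> Poly_Mapping.keys"
abbreviation single :: "'a \<Rightarrow> 'b::zero \<Rightarrow> 'a \<Rightarrow>\<^sub>0 'b" where
  "single \<equiv> Poly_Mapping.single"

section \<open>Monomials\<close>

lemma poly_mapping_sum_single:
  fixes F :: "'a \<Rightarrow>\<^sub>0 'b::comm_monoid_add"
  shows "F = (\<Sum>m\<in>keys F. single m (lookup F m))"
  by (rule poly_mapping_eqI) (simp add: lookup_sum lookup_single when_def in_keys_iff)

lemma keys_add_monomial: "keys (a + b) = keys a \<union> keys (b :: nat \<Rightarrow>\<^sub>0 nat)"
  by (auto simp: in_keys_iff lookup_add)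

definition mon_eval :: "(nat \<Rightarrow> 'b::comm_monoid_mult) \<Rightarrow> (nat \<Rightarrow>\<^sub>0 nat) \<Rightarrow> 'b" where
  "mon_eval x m = (\<Prod>i\<in>keys m. x i ^ lookup m i)"

lemma mon_eval_superset:
  assumes "finite S" "keys m \<subseteq> S"
  shows "mon_eval x m = (\<Prod>i\<in>S. x i ^ lookup m i)"
  unfolding mon_eval_def
  by (rule prod.mono_neutral_left) (use assms in \<open>auto simp: in_keys_iff\<close>)

lemma mon_eval_add: "mon_eval x (a + b) = mon_eval x a * mon_eval x b"
proof -
  let ?S = "keys a \<union> keys b"
  have "mon_eval x (a + b) = (\<Prod>i\<in>?S. x i ^ lookup a i * x i ^ lookup b i)"
    by (subst mon_eval_superset[of ?S]) (auto simp: keys_add_monomial lookup_add power_add)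
  also have "\<dots> = mon_eval x a * mon_eval x b"
    by (subst (1 2) mon_eval_superset[of ?S]) (auto simp: prod.distrib)
  finally show ?thesis .
qed

lemma mon_eval_0 [simp]: "mon_eval x 0 = 1"
  by (simp add: mon_eval_def)

lemma mon_eval_single [simp]: "mon_eval x (single i k) = x i ^ k"
  by (simp add: mon_eval_def)

lemma mon_eval_eq_0:
  assumes "k \<in> keys m" "x k = 0"
  shows "mon_eval x m = (0 :: 'b::comm_semiring_1)"
  unfolding mon_eval_def using assms
  by (intro prod_zero) (auto simp: in_keys_iff zero_power intro!: bexI[of _ k])

lemma mon_deg_superset:
  assumes "finite S" "keys m \<subseteq> S"
  shows "mon_deg m = (\<Sum>i\<in>S. lookup m i)"
  unfolding mon_deg_def
  by (rule sum.mono_neutral_left) (use assms in \<open>auto simp: in_keys_iff\<close>)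

lemma mon_deg_add: "mon_deg (a + b) = mon_deg a + mon_deg b"
proof -
  let ?S = "keys a \<union> keys b"
  have "mon_deg (a + b) = (\<Sum>i\<in>?S. lookup a i + lookup b i)"
    by (subst mon_deg_superset[of ?S]) (auto simp: keys_add_monomial lookup_add)
  also have "\<dots> = mon_deg a + mon_deg b"
    by (subst (1 2) mon_deg_superset[of ?S]) (auto simp: sum.distrib)
  finally show ?thesis .
qed

lemma mon_deg_0 [simp]: "mon_deg 0 = 0"
  by (simp add: mon_deg_def)

lemma mon_deg_single [simp]: "mon_deg (single i k) = k"
  by (simp add: mon_deg_def)

lemma mon_deg_eq_0_iff: "mon_deg m = 0 \<longleftrightarrow> m = 0"
  by (auto simp: mon_deg_def in_keys_iff intro: poly_mapping_eqI)

lemma monomial_eq_single_if_keys_subset: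
  assumes "keys u \<subseteq> {k}"
  shows "u = single k (mon_deg u)"
proof -
  have "mon_deg u = lookup u k"
    using mon_deg_superset[of "{k}" u] assms by simp
  moreover have "lookup u j = 0" if "j \<noteq> k" for j
    using assms that by (auto simp: in_keys_iff)
  ultimately show ?thesis
    by (intro poly_mapping_eqI) (auto simp: lookup_single when_def)
qed

lemma monomial_add_diff_cancel:
  assumes "\<And>i. lookup a i \<le> lookup c i"
  shows "a + (c - a) = (c :: nat \<Rightarrow>\<^sub>0 nat)"
  by (rule poly_mapping_eqI) (use assms in \<open>simp add: lookup_add lookup_minus\<close>)

lemma mon_deg_le_pointwise:
  assumes "\<And>i. lookup a i \<le> lookup c i"
  shows "mon_deg c = mon_deg a + mon_deg (c - a)"
  by (subst (1) monomial_add_diff_cancel[OF assms, symmetric]) (rule mon_deg_add)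

lemma eq_if_le_pointwise_and_mon_deg_eq:
  assumes "\<And>i. lookup a i \<le> lookup c i" "mon_deg a = mon_deg c"
  shows "a = c"
proof -
  have "c - a = 0"
    using mon_deg_le_pointwise[OF assms(1)] assms(2) by (simp add: mon_deg_eq_0_iff)
  then show ?thesis
    using monomial_add_diff_cancel[OF assms(1)] by simp
qed

section \<open>Products and evaluation of polynomials\<close>

lemma mpoly_mult_expansion:
  fixes F G :: "'k::comm_ring_1 mpoly"
  shows "F * G = (\<Sum>a\<in>keys F. \<Sum>b\<in>keys G. single (a + b) (lookup F a * lookup G b))"
proof -
  have "F * G = (\<Sum>a\<in>keys F. single a (lookup F a)) * (\<Sum>b\<in>keys G. single b (lookup G b))"
    by (subst (1) poly_mapping_sum_single[of F], subst (1) poly_mapping_sum_single[of G]) simp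
  then show ?thesis by (simp add: sum_product mult_single)
qed

lemma lookup_mpoly_mult:
  fixes P Q :: "'k::comm_ring_1 mpoly"
  shows "lookup (P * Q) \<mu> = (\<Sum>a\<in>keys P. \<Sum>b\<in>keys Q. (lookup P a * lookup Q b when a + b = \<mu>))"
  unfolding mpoly_mult_expansion[of P Q] by (simp add: lookup_sum lookup_single)

lemma lookup_mpoly_mult_unique:
  fixes P Q :: "'k::comm_ring_1 mpoly"
  assumes "s + t = \<mu>" and "\<And>a b. a \<in> keys P \<Longrightarrow> b \<in> keys Q \<Longrightarrow> a + b = \<mu> \<Longrightarrow> a = s \<and> b = t"
  shows "lookup (P * Q) \<mu> = lookup P s * lookup Q t"
proof -
  have summand: "(lookup P a * lookup Q b when a + b = \<mu>) =
      (if b = t then if a = s then lookup P a * lookup Q b else 0 else 0)"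
    if "a \<in> keys P" "b \<in> keys Q" for a b
  proof (cases "a + b = \<mu>")
    case True
    with assms(2)[OF that] show ?thesis by simp
  next
    case False
    with assms(1) show ?thesis by (auto simp: when_def)
  qed
  have inner: "(\<Sum>b\<in>keys Q. (lookup P a * lookup Q b when a + b = \<mu>)) =
      (if a = s then lookup P a * lookup Q t else 0)" if "a \<in> keys P" for a
  proof -
    have "(\<Sum>b\<in>keys Q. (lookup P a * lookup Q b when a + b = \<mu>)) =
        (\<Sum>b\<in>keys Q. if b = t then if a = s then lookup P a * lookup Q b else 0 else 0)"
      by (rule sum.cong[OF refl], rule summand[OF that])
    also have "\<dots> = (if a = s then lookup P a * lookup Q t else 0)"
      by (simp add: in_keys_iff)
    finally show ?thesis .
  qed
  have "lookup (P * Q) \<mu> = (\<Sum>a\<in>keys P. if a = s then lookup P a * lookup Q t else 0)"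
    unfolding lookup_mpoly_mult by (rule sum.cong[OF refl], rule inner)
  also have "\<dots> = lookup P s * lookup Q t"
    by (simp add: in_keys_iff)
  finally show ?thesis .
qed

lemma lookup_single_mult:
  fixes P :: "'k::comm_ring_1 mpoly"
  shows "lookup (single k c * P) \<mu> = (if \<exists>v. \<mu> = k + v then c * lookup P (\<mu> - k) else 0)"
proof (cases "\<exists>v. \<mu> = k + v")
  case True
  then obtain v where v: "\<mu> = k + v" by auto
  have "lookup (single k c * P) \<mu> = lookup (single k c) k * lookup P v"
    by (rule lookup_mpoly_mult_unique) (auto simp: v split: if_splits)
  then show ?thesis using v by simp
next
  case False
  then show ?thesis by (auto simp: lookup_mpoly_mult when_def intro!: sum.neutral)
qed

context comm_ring_hom
begin

lemma mp_eval_altdef: "mp_eval hom x F = (\<Sum>m\<in>keys F. hom (lookup F m) * mon_eval x m)"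
  by (simp add: mp_eval_def mon_eval_def)

lemma mp_eval_add: "mp_eval hom x (F + G) = mp_eval hom x F + mp_eval hom x G"
  unfolding mp_eval_altdef
  by (rule setsum_keys_plus_distrib[where f = "\<lambda>m c. hom c * mon_eval x m"])
    (simp_all add: hom_add distrib_right)

lemma mp_eval_0 [simp]: "mp_eval hom x 0 = 0"
  by (simp add: mp_eval_def)

lemma mp_eval_sum: "mp_eval hom x (\<Sum>a\<in>A. f a) = (\<Sum>a\<in>A. mp_eval hom x (f a))"
  by (induction A rule: infinite_finite_induct) (auto simp: mp_eval_add)

lemma mp_eval_single: "mp_eval hom x (single m c) = hom c * mon_eval x m"
  by (cases "c = 0") (auto simp: mp_eval_altdef)

lemma mp_eval_mult: "mp_eval hom x (F * G) = mp_eval hom x F * mp_eval hom x G"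
proof -
  have "mp_eval hom x (F * G) = (\<Sum>a\<in>keys F. \<Sum>b\<in>keys G.
      hom (lookup F a) * mon_eval x a * (hom (lookup G b) * mon_eval x b))"
    unfolding mpoly_mult_expansion[of F G]
    by (simp add: mp_eval_sum mp_eval_single hom_mult mon_eval_add mult_ac)
  also have "\<dots> = mp_eval hom x F * mp_eval hom x G"
    by (simp add: mp_eval_altdef sum_product)
  finally show ?thesis .
qed

lemma mp_eval_1 [simp]: "mp_eval hom x 1 = 1"
  using mp_eval_single[of x 0 1] by simp

lemma mp_eval_prod: "mp_eval hom x (\<Prod>a\<in>A. f a) = (\<Prod>a\<in>A. mp_eval hom x (f a))"
  by (induction A rule: infinite_finite_induct) (auto simp: mp_eval_mult)

lemma mp_eval_power: "mp_eval hom x (F ^ k) = mp_eval hom x F ^ k"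
  by (induction k) (auto simp: mp_eval_mult)

lemma mp_eval_const: "mp_eval hom x (mp_const c) = hom c"
  by (simp add: mp_const_def mp_eval_single)

lemma mp_eval_var: "mp_eval hom x (mp_var i) = x i"
  by (simp add: mp_var_def mp_eval_single)

lemma mp_eval_concentrated:
  assumes "finite S" and "\<And>u. u \<in> keys F \<Longrightarrow> u \<notin> S \<Longrightarrow> mon_eval x u = 0"
  shows "mp_eval hom x F = (\<Sum>u\<in>S. hom (lookup F u) * mon_eval x u)"
proof -
  have "mp_eval hom x F = (\<Sum>u\<in>keys F \<union> S. hom (lookup F u) * mon_eval x u)"
    unfolding mp_eval_altdef
    by (rule sum.mono_neutral_left) (use assms in \<open>auto simp: in_keys_iff\<close>)
  also have "\<dots> = (\<Sum>u\<in>S. hom (lookup F u) * mon_eval x u)"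
    by (rule sum.mono_neutral_right) (use assms in \<open>auto simp: in_keys_iff\<close>)
  finally show ?thesis .
qed

lemma mp_eval_mp_eval:
  "mp_eval hom y (mp_eval mp_const \<sigma> F) = mp_eval hom (\<lambda>i. mp_eval hom y (\<sigma> i)) F"
  unfolding mp_eval_def[of mp_const]
  by (simp add: mp_eval_sum mp_eval_mult mp_eval_const mp_eval_prod mp_eval_power)
    (simp add: mp_eval_def)

lemma vanishes_if_right_inverse:
  fixes n :: nat
  assumes inverse: "\<forall>i\<le>n. \<forall>k\<le>n. (\<Sum>j\<le>n. A i j * B j k) = (if i = k then 1 else 0)"
    and g: "\<forall>j\<le>n. (\<Sum>i\<le>n. g i * hom (A i j)) = 0" and k: "k \<le> n"
  shows "g k = 0"
proof -
  have "0 = (\<Sum>j\<le>n. (\<Sum>i\<le>n. g i * hom (A i j)) * hom (B j k))"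
    using g by simp
  also have "\<dots> = (\<Sum>i\<le>n. g i * hom (\<Sum>j\<le>n. A i j * B j k))"
    by (simp add: sum_distrib_left sum_distrib_right hom_sum hom_mult mult_ac) (rule sum.swap)
  also have "\<dots> = (\<Sum>i\<le>n. if i = k then g i else 0)"
    using inverse k by (intro sum.cong refl) auto
  also have "\<dots> = g k"
    using k by simp
  finally show ?thesis by simp
qed

end

interpretation mp_const: comm_ring_hom "mp_const :: 'k::comm_ring_1 \<Rightarrow> 'k mpoly"
  by unfold_locales (simp_all add: mp_const_def single_add mult_single)

interpretation to_ac: comm_ring_hom "to_ac :: 'k::field \<Rightarrow> 'k alg_closure"
  by unfold_locales simp_all

lemma mp_var_power: "mp_var i ^ k = (single (single i k) 1 :: 'k::comm_ring_1 mpoly)"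
proof (induction k)
  case (Suc k)
  then show ?case
    by (simp add: mp_var_def mult_single single_add[symmetric] mult.commute)
qed simp

lemma prod_single_1: "(\<Prod>i\<in>A. single (f i) 1) = (single (\<Sum>i\<in>A. f i) 1 :: 'k::comm_ring_1 mpoly)"
  by (induction A rule: infinite_finite_induct) (auto simp: mult_single)

lemma mon_eval_mp_var: "mon_eval mp_var m = (single m 1 :: 'k::comm_ring_1 mpoly)"
proof -
  have "mon_eval mp_var m = (single (\<Sum>i\<in>keys m. single i (lookup m i)) 1 :: 'k mpoly)"
    by (simp add: mon_eval_def mp_var_power prod_single_1)
  then show ?thesis
    by (simp flip: poly_mapping_sum_single)
qed

lemma mp_eval_mp_var_eq_self: "mp_eval mp_const mp_var F = (F :: 'k::comm_ring_1 mpoly)"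
proof -
  have "mp_eval mp_const mp_var F = (\<Sum>m\<in>keys F. single m (lookup F m))"
    by (simp add: mp_const.mp_eval_altdef mon_eval_mp_var mp_const_def mult_single)
  then show ?thesis
    by (simp flip: poly_mapping_sum_single)
qed

section \<open>Partial derivatives\<close>

lemma diff_single_add:
  assumes "lookup m i > 0"
  shows "(m - single i 1) + b = (m + b) - single i (1::nat)"
  by (rule poly_mapping_eqI) (use assms in \<open>auto simp: lookup_add lookup_minus lookup_single when_def\<close>)

lemma diff_single_add_cancel:
  assumes "lookup m i > 0"
  shows "(m - single i 1) + single i 1 = (m :: nat \<Rightarrow>\<^sub>0 nat)"
  by (rule poly_mapping_eqI) (use assms in \<open>auto simp: lookup_add lookup_minus lookup_single when_def\<close>)

lemma lookup_mp_pderiv: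
  fixes F :: "'k::comm_ring_1 mpoly"
  shows "lookup (mp_pderiv i F) u = of_nat (lookup u i + 1) * lookup F (u + single i 1)"
proof -
  have "lookup (mp_pderiv i F) u = (\<Sum>m\<in>keys F. (of_nat (lookup m i) * lookup F m when m - single i 1 = u))"
    by (simp add: mp_pderiv_def lookup_sum lookup_single)
  also have "\<dots> = (\<Sum>m\<in>keys F. if m = u + single i 1 then of_nat (lookup m i) * lookup F m else 0)"
  proof (rule sum.cong[OF refl])
    fix m
    show "(of_nat (lookup m i) * lookup F m when m - single i 1 = u) =
          (if m = u + single i 1 then of_nat (lookup m i) * lookup F m else 0)"
    proof (cases "lookup m i = 0")
      case True
      then have "m \<noteq> u + single i 1" by (auto simp: lookup_add)
      then show ?thesis using True by (simp add: when_def)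
    next
      case False
      then have "m - single i 1 = u \<longleftrightarrow> m = u + single i 1"
        using diff_single_add_cancel[of m i] by auto
      then show ?thesis by (simp add: when_def)
    qed
  qed
  also have "\<dots> = of_nat (lookup u i + 1) * lookup F (u + single i 1)"
    by (cases "u + single i 1 \<in> keys F") (auto simp: in_keys_iff lookup_add)
  finally show ?thesis .
qed

lemma keys_mp_pderiv:
  fixes F :: "'k::comm_ring_1 mpoly"
  shows "u \<in> keys (mp_pderiv j F) \<Longrightarrow> u + single j 1 \<in> keys F"
  by (auto simp: in_keys_iff lookup_mp_pderiv)

lemma mp_pderiv_add:
  "mp_pderiv i (F + G) = mp_pderiv i F + mp_pderiv i (G :: 'k::comm_ring_1 mpoly)"
  by (rule poly_mapping_eqI) (simp add: lookup_mp_pderiv lookup_add distrib_left)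

lemma mp_pderiv_sum:
  "mp_pderiv i (\<Sum>a\<in>A. f a) = (\<Sum>a\<in>A. mp_pderiv i (f a :: 'k::comm_ring_1 mpoly))"
  by (rule poly_mapping_eqI) (simp add: lookup_mp_pderiv lookup_sum sum_distrib_left)

lemma mp_pderiv_0 [simp]: "mp_pderiv i (0 :: 'k::comm_ring_1 mpoly) = 0"
  by (simp add: mp_pderiv_def)

lemma mp_pderiv_single:
  "mp_pderiv i (single m c) = single (m - single i 1) (of_nat (lookup m i) * (c :: 'k::comm_ring_1))"
  by (cases "c = 0") (auto simp: mp_pderiv_def)

lemma mp_pderiv_single_mult:
  "mp_pderiv i (single a (c :: 'k::comm_ring_1) * single b d) =
     mp_pderiv i (single a c) * single b d + single a c * mp_pderiv i (single b d)"
proof -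
  have a: "single (a - single i 1 + b) (of_nat (lookup a i) * c * d) =
      single (a + b - single i 1) (of_nat (lookup a i) * c * d)"
    using diff_single_add[of a i b] by (cases "lookup a i = 0") auto
  have b: "single (a + (b - single i 1)) (c * (of_nat (lookup b i) * d)) =
      single (a + b - single i 1) (of_nat (lookup b i) * c * d)"
    using diff_single_add[of b i a] by (cases "lookup b i = 0") (auto simp: add.commute mult_ac)
  have "mp_pderiv i (single a c) * single b d + single a c * mp_pderiv i (single b d) =
      single (a + b - single i 1) (of_nat (lookup a i) * c * d + of_nat (lookup b i) * c * d)"
    by (simp only: mp_pderiv_single mult_single a b single_add)
  also have "\<dots> = mp_pderiv i (single a c * single b d)"
    by (simp add: mp_pderiv_single mult_single lookup_add algebra_simps)
  finally show ?thesis by simp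
qed

lemma mp_pderiv_mult:
  "mp_pderiv i (F * G) = mp_pderiv i F * G + F * mp_pderiv i (G :: 'k::comm_ring_1 mpoly)"
proof -
  let ?F = "\<Sum>a\<in>keys F. single a (lookup F a)" and ?G = "\<Sum>b\<in>keys G. single b (lookup G b)"
  have "mp_pderiv i (?F * ?G) = mp_pderiv i ?F * ?G + ?F * mp_pderiv i ?G"
    by (simp add: sum_product mp_pderiv_sum mp_pderiv_single_mult sum.distrib)
  then show ?thesis
    by (simp flip: poly_mapping_sum_single)
qed

lemma mp_pderiv_const [simp]: "mp_pderiv i (mp_const c) = (0 :: 'k::comm_ring_1 mpoly)"
  by (simp add: mp_const_def mp_pderiv_single)

lemma mp_pderiv_var: "mp_pderiv i (mp_var j) = (if i = j then 1 else (0 :: 'k::comm_ring_1 mpoly))"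
  by (auto simp: mp_var_def mp_pderiv_single lookup_single)

text \<open>The chain rule is proved by showing that the polynomials satisfying it form a subring
  containing the constants and the variables.\<close>

definition chain_rule_holds :: "nat \<Rightarrow> nat set \<Rightarrow> (nat \<Rightarrow> 'k::comm_ring_1 mpoly) \<Rightarrow> 'k mpoly \<Rightarrow> bool" where
  "chain_rule_holds j I \<sigma> P \<longleftrightarrow> mp_pderiv j (mp_eval mp_const \<sigma> P) =
     (\<Sum>i\<in>I. mp_eval mp_const \<sigma> (mp_pderiv i P) * mp_pderiv j (\<sigma> i))"

lemma chain_rule_holds_add:
  "chain_rule_holds j I \<sigma> P \<Longrightarrow> chain_rule_holds j I \<sigma> Q \<Longrightarrow> chain_rule_holds j I \<sigma> (P + Q)"
  by (simp add: chain_rule_holds_def mp_const.mp_eval_add mp_pderiv_add distrib_right sum.distrib)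

lemma chain_rule_holds_mult:
  "chain_rule_holds j I \<sigma> P \<Longrightarrow> chain_rule_holds j I \<sigma> Q \<Longrightarrow> chain_rule_holds j I \<sigma> (P * Q)"
  by (simp add: chain_rule_holds_def mp_const.mp_eval_add mp_const.mp_eval_mult mp_pderiv_mult
      mp_pderiv_add distrib_right distrib_left sum.distrib sum_distrib_left sum_distrib_right mult_ac)

lemma chain_rule_holds_const: "chain_rule_holds j I \<sigma> (mp_const c)"
  by (simp add: chain_rule_holds_def mp_const.mp_eval_const)

lemma chain_rule_holds_var:
  assumes "finite I" "k \<in> I"
  shows "chain_rule_holds j I \<sigma> (mp_var k)"
proof -
  have "mp_eval mp_const \<sigma> (mp_pderiv i (mp_var k)) * mp_pderiv j (\<sigma> i) =
      (if i = k then mp_pderiv j (\<sigma> i) else 0)" for i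
    by (simp add: mp_pderiv_var)
  then show ?thesis
    using assms by (simp add: chain_rule_holds_def mp_const.mp_eval_var)
qed

lemma chain_rule_holds_sum:
  "(\<And>a. a \<in> A \<Longrightarrow> chain_rule_holds j I \<sigma> (f a)) \<Longrightarrow> chain_rule_holds j I \<sigma> (\<Sum>a\<in>A. f a)"
  by (induction A rule: infinite_finite_induct)
    (auto simp: chain_rule_holds_add chain_rule_holds_const[of j I \<sigma> 0, simplified])

lemma chain_rule_holds_prod:
  "(\<And>a. a \<in> A \<Longrightarrow> chain_rule_holds j I \<sigma> (f a)) \<Longrightarrow> chain_rule_holds j I \<sigma> (\<Prod>a\<in>A. f a)"
  by (induction A rule: infinite_finite_induct)
    (auto simp: chain_rule_holds_mult chain_rule_holds_const[of j I \<sigma> 1, simplified])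

lemma chain_rule_holds_power: "chain_rule_holds j I \<sigma> P \<Longrightarrow> chain_rule_holds j I \<sigma> (P ^ k)"
  by (induction k) (auto simp: chain_rule_holds_mult chain_rule_holds_const[of j I \<sigma> 1, simplified])

lemma mp_pderiv_mp_eval:
  fixes F :: "'k::comm_ring_1 mpoly"
  assumes "finite I" "vars_in I F"
  shows "mp_pderiv j (mp_eval mp_const \<sigma> F) =
     (\<Sum>i\<in>I. mp_eval mp_const \<sigma> (mp_pderiv i F) * mp_pderiv j (\<sigma> i))"
proof -
  have "chain_rule_holds j I \<sigma> (mp_eval mp_const mp_var F)"
    unfolding mp_eval_def
  proof (intro chain_rule_holds_sum chain_rule_holds_mult chain_rule_holds_const
      chain_rule_holds_prod chain_rule_holds_power chain_rule_holds_var[OF assms(1)])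
    fix m i assume "m \<in> keys F" "i \<in> keys m"
    then show "i \<in> I" using assms(2) by (auto simp: vars_in_def)
  qed
  then show ?thesis by (simp add: chain_rule_holds_def mp_eval_mp_var_eq_self)
qed

section \<open>Homogeneous polynomials\<close>

lemma homogeneous_0 [simp]: "homogeneous d 0"
  by (simp add: homogeneous_def)

lemma homogeneous_add: "homogeneous d P \<Longrightarrow> homogeneous d Q \<Longrightarrow> homogeneous d (P + Q)"
  using keys_add[of P Q] by (auto simp: homogeneous_def)

lemma homogeneous_sum: "(\<And>a. a \<in> A \<Longrightarrow> homogeneous d (f a)) \<Longrightarrow> homogeneous d (\<Sum>a\<in>A. f a)"
  by (induction A rule: infinite_finite_induct) (auto simp: homogeneous_add)

lemma homogeneous_mult:
  "homogeneous a P \<Longrightarrow> homogeneous b Q \<Longrightarrow> homogeneous (a + b) (P * Q :: 'k::comm_ring_1 mpoly)"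
  using keys_mult[of P Q] by (auto simp: homogeneous_def mon_deg_add)

lemma homogeneous_1: "homogeneous 0 (1 :: 'k::comm_ring_1 mpoly)"
  by (simp add: homogeneous_def flip: single_one)

lemma homogeneous_prod:
  "(\<And>a. a \<in> A \<Longrightarrow> homogeneous (d a) (f a)) \<Longrightarrow>
    homogeneous (\<Sum>a\<in>A. d a) (\<Prod>a\<in>A. f a :: 'k::comm_ring_1 mpoly)"
  by (induction A rule: infinite_finite_induct) (auto simp: homogeneous_1 homogeneous_mult)

lemma homogeneous_power:
  "homogeneous d P \<Longrightarrow> homogeneous (k * d) (P ^ k :: 'k::comm_ring_1 mpoly)"
  by (induction k) (auto simp: homogeneous_1 dest: homogeneous_mult)

lemma homogeneous_const: "homogeneous 0 (mp_const c)"
  by (simp add: homogeneous_def mp_const_def)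

lemma homogeneous_var: "homogeneous 1 (mp_var i :: 'k::comm_ring_1 mpoly)"
  by (simp add: homogeneous_def mp_var_def)

lemma homogeneous_mp_eval:
  assumes "homogeneous d F" "\<And>i. homogeneous 1 (\<sigma> i)"
  shows "homogeneous d (mp_eval mp_const \<sigma> (F :: 'k::comm_ring_1 mpoly))"
  unfolding mp_const.mp_eval_altdef
proof (rule homogeneous_sum)
  fix m assume m: "m \<in> keys F"
  have "homogeneous (0 + (\<Sum>i\<in>keys m. lookup m i * 1)) (mp_const (lookup F m) * mon_eval \<sigma> m)"
    unfolding mon_eval_def by (intro homogeneous_mult homogeneous_const homogeneous_prod homogeneous_power assms(2))
  moreover have "0 + (\<Sum>i\<in>keys m. lookup m i * 1) = d"
    using assms(1) m by (simp add: homogeneous_def mon_deg_def)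
  ultimately show "homogeneous d (mp_const (lookup F m) * mon_eval \<sigma> m)" by simp
qed

lemma homogeneous_mp_pderiv:
  fixes F :: "'k::comm_ring_1 mpoly"
  assumes "homogeneous (d + 1) F"
  shows "homogeneous d (mp_pderiv j F)"
  unfolding homogeneous_def
proof
  fix u assume "u \<in> keys (mp_pderiv j F)"
  then have "mon_deg (u + single j 1) = d + 1"
    using assms keys_mp_pderiv by (auto simp: homogeneous_def)
  then show "mon_deg u = d" by (simp add: mon_deg_add)
qed

section \<open>Finite fields\<close>

lemma power_card_UNIV_eq_self:
  fixes x :: "'a::{finite,field}"
  shows "x ^ CARD('a) = x"
proof (cases "x = 0")
  case False
  let ?R = "ring_of_type_algebra :: 'a ring"
  interpret field ?R by (rule field_from_type_algebra)
  have units: "Units ?R = UNIV - {0}"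
    using field_Units by (simp add: ring_of_type_algebra_def)
  have pow: "x [^]\<^bsub>?R\<^esub> k = x ^ k" for k
    by (induction k) (simp_all add: ring_of_type_algebra_def mult.commute)
  have "x ^ (CARD('a) - 1) = 1"
    using units_power_order_eq_one[of x] False
    unfolding units pow by (simp add: card_Diff_singleton ring_of_type_algebra_def)
  moreover have "CARD('a) = Suc (CARD('a) - 1)"
    using finite_UNIV_card_ge_0[where 'a = 'a] by simp
  ultimately show ?thesis
    by (metis power_Suc2 mult_1)
qed (simp add: finite_UNIV_card_ge_0)

lemma card_UNIV_ge_2: "CARD('a::{finite,field}) \<ge> 2"
proof -
  have "card {0, 1::'a} \<le> CARD('a)" by (rule card_mono) auto
  then show ?thesis by simp
qed

text \<open>Every element is a root of \<open>(X + 1)\<^sup>q - X\<^sup>q - 1\<close>, whose degree is less than \<open>q\<close>.\<close>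

lemma of_nat_card_UNIV_choose:
  assumes "0 < k" "k < CARD('a::{finite,field})"
  shows "of_nat (CARD('a) choose k) = (0::'a)"
proof -
  define q where "q = CARD('a)"
  define P :: "'a poly" where "P = [:1, 1:] ^ q - monom 1 q - 1"
  have coeff_P: "coeff P i =
      of_nat (q choose i) - (if i = q then 1 else 0) - (if i = 0 then 1 else 0)" for i
    by (cases "i \<le> q") (simp_all add: P_def coeff_linear_poly_power coeff_monom coeff_1
        binomial_eq_0 coeff_eq_0 degree_linear_power)
  have roots: "poly P x = 0" for x
    by (simp add: P_def poly_monom q_def power_card_UNIV_eq_self)
  have "P = 0"
  proof (rule ccontr)
    assume "P \<noteq> 0"
    then have "card {x. poly P x = 0} \<le> degree P" by (rule card_poly_roots_bound)
    moreover have "degree P \<le> q - 1"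
      using card_UNIV_ge_2[where 'a = 'a] by (intro degree_le) (auto simp: coeff_P q_def binomial_eq_0)
    ultimately show False
      using roots card_UNIV_ge_2[where 'a = 'a] by (simp add: q_def)
  qed
  then show ?thesis
    using coeff_P[of k] assms by (simp add: q_def)
qed

lemma of_nat_card_UNIV [simp]: "of_nat CARD('a) = (0::'a::{finite,field})"
  using of_nat_card_UNIV_choose[where 'a = 'a and k = 1] card_UNIV_ge_2[where 'a = 'a] by simp

lemma mpoly_power_card_add:
  fixes P Q :: "'k::{finite,field} mpoly"
  shows "(P + Q) ^ CARD('k) = P ^ CARD('k) + Q ^ CARD('k)"
proof -
  have "of_nat (CARD('k) choose i) = (0 :: 'k mpoly)" if "0 < i" "i < CARD('k)" for i
    using of_nat_card_UNIV_choose[OF that] by (metis single_of_nat single_zero)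
  then have "(P + Q) ^ CARD('k) =
      (\<Sum>i\<in>{0, CARD('k)}. of_nat (CARD('k) choose i) * P ^ i * Q ^ (CARD('k) - i))"
    unfolding binomial_ring by (intro sum.mono_neutral_right) auto
  then show ?thesis
    using card_UNIV_ge_2[where 'a = 'k] by (simp add: add.commute)
qed

lemma mpoly_power_card_sum:
  fixes f :: "'b \<Rightarrow> 'k::{finite,field} mpoly"
  shows "(\<Sum>a\<in>A. f a) ^ CARD('k) = (\<Sum>a\<in>A. f a ^ CARD('k))"
  using card_UNIV_ge_2[where 'a = 'k]
  by (induction A rule: infinite_finite_induct) (auto simp: mpoly_power_card_add power_0_left)

lemma mpoly_power_card_linear:
  fixes c :: "nat \<Rightarrow> 'k::{finite,field}"
  shows "(\<Sum>j\<in>A. mp_const (c j) * P j) ^ CARD('k) = (\<Sum>j\<in>A. mp_const (c j) * P j ^ CARD('k))"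
proof -
  have "mp_const (c j) ^ CARD('k) = mp_const (c j)" for j
    by (metis mp_const.hom_power power_card_UNIV_eq_self)
  then show ?thesis
    by (simp add: mpoly_power_card_sum power_mult_distrib)
qed

section \<open>Linear changes of coordinates\<close>

definition lin_form :: "nat \<Rightarrow> (nat \<Rightarrow> nat \<Rightarrow> 'k::comm_ring_1) \<Rightarrow> nat \<Rightarrow> 'k mpoly" where
  "lin_form n A i = (\<Sum>j\<le>n. mp_const (A i j) * mp_var j)"

lemma lin_change_eq_mp_eval: "lin_change n A F = mp_eval mp_const (lin_form n A) F"
  by (simp add: lin_change_def mp_subst_def mp_eval_def lin_form_def)

lemma mp_pderiv_lin_form: "j \<le> n \<Longrightarrow> mp_pderiv j (lin_form n A i) = mp_const (A i j)"
  by (simp add: lin_form_def mp_pderiv_sum mp_pderiv_mult mp_pderiv_var if_distrib cong: if_cong)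

lemma homogeneous_lin_form: "homogeneous 1 (lin_form n A i)"
  unfolding lin_form_def
proof (rule homogeneous_sum)
  fix j
  show "homogeneous 1 (mp_const (A i j) * mp_var j)"
    using homogeneous_mult[OF homogeneous_const homogeneous_var] by simp
qed

lemma homogeneous_lin_change: "homogeneous d F \<Longrightarrow> homogeneous d (lin_change n A F)"
  unfolding lin_change_eq_mp_eval by (rule homogeneous_mp_eval[OF _ homogeneous_lin_form])

lemma mp_pderiv_lin_change:
  fixes F :: "'k::field mpoly"
  assumes "vars_in {..n} F" "j \<le> n"
  shows "mp_pderiv j (lin_change n A F) = (\<Sum>i\<le>n. lin_change n A (mp_pderiv i F) * mp_const (A i j))"
  using mp_pderiv_mp_eval[OF _ assms(1), of j "lin_form n A"] assms(2)
  by (simp add: lin_change_eq_mp_eval mp_pderiv_lin_form)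

definition frobenius_form :: "nat \<Rightarrow> 'k::{finite,field} mpoly \<Rightarrow> 'k mpoly" where
  "frobenius_form n F = (\<Sum>i\<le>n. mp_var i ^ CARD('k) * mp_pderiv i F)"

lemma frobenius_nonclassical_iff_dvd: "frobenius_nonclassical n F \<longleftrightarrow> F dvd frobenius_form n F"
  by (simp add: frobenius_nonclassical_def frobenius_form_def)

text \<open>Since \<open>P \<mapsto> P\<^sup>q\<close> is additive and fixes the coefficients, the Frobenius form commutes
  with linear substitutions.\<close>

lemma frobenius_form_lin_change:
  fixes F :: "'k::{finite,field} mpoly"
  assumes "vars_in {..n} F"
  shows "frobenius_form n (lin_change n A F) = lin_change n A (frobenius_form n F)"
proof -
  let ?S = "lin_change n A"
  have "frobenius_form n (?S F) =
      (\<Sum>j\<le>n. mp_var j ^ CARD('k) * (\<Sum>i\<le>n. ?S (mp_pderiv i F) * mp_const (A i j)))"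
    unfolding frobenius_form_def by (intro sum.cong refl) (simp add: mp_pderiv_lin_change[OF assms])
  also have "\<dots> = (\<Sum>i\<le>n. ?S (mp_pderiv i F) * (\<Sum>j\<le>n. mp_const (A i j) * mp_var j ^ CARD('k)))"
    by (simp add: sum_distrib_left sum_distrib_right mult_ac) (rule sum.swap)
  also have "\<dots> = (\<Sum>i\<le>n. ?S (mp_pderiv i F) * lin_form n A i ^ CARD('k))"
    by (simp add: lin_form_def mpoly_power_card_linear)
  also have "\<dots> = ?S (frobenius_form n F)"
    by (simp add: frobenius_form_def lin_change_eq_mp_eval mp_const.mp_eval_sum mp_const.mp_eval_mult
        mp_const.mp_eval_power mp_const.mp_eval_var mult_ac)
  finally show ?thesis .
qed

lemma frobenius_nonclassical_lin_change:
  fixes F :: "'k::{finite,field} mpoly"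
  assumes "vars_in {..n} F" "frobenius_nonclassical n F"
  shows "frobenius_nonclassical n (lin_change n A F)"
proof -
  obtain L where "frobenius_form n F = F * L"
    using assms(2) by (auto simp: frobenius_nonclassical_iff_dvd)
  then have "frobenius_form n (lin_change n A F) = lin_change n A F * lin_change n A L"
    unfolding frobenius_form_lin_change[OF assms(1)]
    by (simp add: lin_change_eq_mp_eval mp_const.mp_eval_mult)
  then show ?thesis
    by (simp add: frobenius_nonclassical_iff_dvd)
qed

lemma right_inverse_imp_left_inverse:
  fixes A B :: "nat \<Rightarrow> nat \<Rightarrow> 'k::field"
  assumes AB: "\<forall>i\<le>n. \<forall>k\<le>n. (\<Sum>j\<le>n. A i j * B j k) = (if i = k then 1 else 0)"
  shows "\<forall>i\<le>n. \<forall>k\<le>n. (\<Sum>j\<le>n. B i j * A j k) = (if i = k then 1 else 0)"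
proof -
  define MA where "MA = mat (Suc n) (Suc n) (\<lambda>(i,j). A i j)"
  define MB where "MB = mat (Suc n) (Suc n) (\<lambda>(i,j). B i j)"
  have MA: "MA \<in> carrier_mat (Suc n) (Suc n)" and MB: "MB \<in> carrier_mat (Suc n) (Suc n)"
    by (auto simp: MA_def MB_def)
  have entry: "(M1 * M2) $$ (i, k) = (\<Sum>j\<le>n. M1 $$ (i, j) * M2 $$ (j, k))"
    if "M1 \<in> carrier_mat (Suc n) (Suc n)" "M2 \<in> carrier_mat (Suc n) (Suc n)" "i \<le> n" "k \<le> n"
    for M1 M2 :: "'k mat" and i k
    using that by (simp add: index_mult_mat scalar_prod_def atLeast0LessThan lessThan_Suc_atMost)
  have "MA * MB = 1\<^sub>m (Suc n)"
  proof (rule eq_matI)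
    fix i k assume "i < dim_row (1\<^sub>m (Suc n) :: 'k mat)" "k < dim_col (1\<^sub>m (Suc n) :: 'k mat)"
    then have ik: "i \<le> n" "k \<le> n" by auto
    show "(MA * MB) $$ (i, k) = 1\<^sub>m (Suc n) $$ (i, k)"
      using entry[OF MA MB ik] AB ik by (simp add: MA_def MB_def)
  qed (simp_all add: MA_def MB_def)
  then have BA: "MB * MA = 1\<^sub>m (Suc n)"
    by (rule mat_mult_left_right_inverse[OF MA MB])
  show ?thesis
  proof (intro allI impI)
    fix i k assume ik: "i \<le> n" "k \<le> n"
    have "(\<Sum>j\<le>n. B i j * A j k) = (MB * MA) $$ (i, k)"
      using entry[OF MB MA ik] ik by (simp add: MA_def MB_def)
    also have "\<dots> = (if i = k then 1 else 0)"
      using BA ik by simp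
    finally show "(\<Sum>j\<le>n. B i j * A j k) = (if i = k then 1 else 0)" .
  qed
qed

definition singular_point :: "nat \<Rightarrow> 'k::field mpoly \<Rightarrow> (nat \<Rightarrow> 'k alg_closure) \<Rightarrow> bool" where
  "singular_point n F x \<longleftrightarrow> (\<exists>i\<le>n. x i \<noteq> 0) \<and> mp_eval to_ac x F = 0 \<and>
     (\<forall>i\<le>n. mp_eval to_ac x (mp_pderiv i F) = 0)"

lemma smooth_hypersurface_iff: "smooth_hypersurface n F \<longleftrightarrow> \<not> (\<exists>x. singular_point n F x)"
  by (auto simp: smooth_hypersurface_def singular_point_def)

lemma singular_point_lin_change:
  fixes F :: "'k::field mpoly"
  assumes vars: "vars_in {..n} F" and A: "Defs.invertible_mat n A"
    and y: "singular_point n (lin_change n A F) y"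
  shows "singular_point n F (\<lambda>i. \<Sum>j\<le>n. to_ac (A i j) * y j)" (is "singular_point n F ?x")
proof -
  obtain B where AB: "\<forall>i\<le>n. \<forall>k\<le>n. (\<Sum>j\<le>n. A i j * B j k) = (if i = k then 1 else 0)"
    using A unfolding Defs.invertible_mat_def by blast
  have BA: "\<forall>i\<le>n. \<forall>k\<le>n. (\<Sum>j\<le>n. A j i * B k j) = (if i = k then 1 else 0)"
  proof (intro allI impI)
    fix i k assume "i \<le> n" "k \<le> n"
    then have "(\<Sum>j\<le>n. B k j * A j i) = (if k = i then 1 else 0)"
      using right_inverse_imp_left_inverse[OF AB] by blast
    then show "(\<Sum>j\<le>n. A j i * B k j) = (if i = k then 1 else 0)"
      by (simp add: mult.commute eq_commute[of i k])
  qed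
  have eval: "mp_eval to_ac y (lin_change n A P) = mp_eval to_ac ?x P" for P
    by (simp add: lin_change_eq_mp_eval to_ac.mp_eval_mp_eval lin_form_def to_ac.mp_eval_sum
        to_ac.mp_eval_mult to_ac.mp_eval_const to_ac.mp_eval_var)
  have "(\<Sum>i\<le>n. mp_eval to_ac ?x (mp_pderiv i F) * to_ac (A i j)) = 0" if "j \<le> n" for j
  proof -
    have "mp_eval to_ac y (mp_pderiv j (lin_change n A F)) = 0"
      using y that by (simp add: singular_point_def)
    then show ?thesis
      unfolding mp_pderiv_lin_change[OF vars that] to_ac.mp_eval_sum to_ac.mp_eval_mult
        to_ac.mp_eval_const eval .
  qed
  then have "\<forall>k\<le>n. mp_eval to_ac ?x (mp_pderiv k F) = 0"
    using to_ac.vanishes_if_right_inverse[where g = "\<lambda>i. mp_eval to_ac ?x (mp_pderiv i F)", OF AB]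
    by blast
  moreover have "mp_eval to_ac ?x F = 0"
    using y eval[of F] by (simp add: singular_point_def)
  moreover have "\<exists>i\<le>n. ?x i \<noteq> 0"
  proof (rule ccontr)
    assume "\<not> ?thesis"
    then have "\<forall>j\<le>n. (\<Sum>i\<le>n. y i * to_ac (A j i)) = 0"
      by (simp add: mult.commute)
    then have "y k = 0" if "k \<le> n" for k
      using to_ac.vanishes_if_right_inverse[where A = "\<lambda>j i. A i j" and B = "\<lambda>i k. B k i", OF BA _ that]
      by simp
    then show False
      using y by (auto simp: singular_point_def)
  qed
  ultimately show ?thesis
    by (simp add: singular_point_def)
qed

section \<open>Polynomials with separated variables\<close>

definition separated_in :: "nat set \<Rightarrow> nat set \<Rightarrow> 'k::zero mpoly \<Rightarrow> bool" where
  "separated_in I J F \<longleftrightarrow> (\<forall>u\<in>keys F. keys u \<subseteq> I \<or> keys u \<subseteq> J)"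

lemma separated_in_add: "vars_in I G \<Longrightarrow> vars_in J H \<Longrightarrow> separated_in I J (G + H)"
  using keys_add[of G H] by (auto simp: separated_in_def vars_in_def)

lemma separated_in_commute: "separated_in I J F \<longleftrightarrow> separated_in J I F"
  by (auto simp: separated_in_def)

lemma separated_in_mp_pderiv:
  fixes F :: "'k::comm_ring_1 mpoly"
  assumes "separated_in I J F"
  shows "separated_in I J (mp_pderiv j F)"
  unfolding separated_in_def
proof
  fix u assume "u \<in> keys (mp_pderiv j F)"
  then have "keys (u + single j 1) \<subseteq> I \<or> keys (u + single j 1) \<subseteq> J"
    using assms keys_mp_pderiv by (auto simp: separated_in_def)
  then show "keys u \<subseteq> I \<or> keys u \<subseteq> J"
    by (auto simp: keys_add_monomial)
qed

lemma separated_in_frobenius_form: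
  fixes F :: "'k::{finite,field} mpoly"
  assumes "separated_in I J F"
  shows "separated_in I J (frobenius_form n F)"
  unfolding separated_in_def
proof
  fix u assume "u \<in> keys (frobenius_form n F)"
  then obtain i where "u \<in> keys (mp_var i ^ CARD('k) * mp_pderiv i F)"
    using keys_sum[of "\<lambda>i. mp_var i ^ CARD('k) * mp_pderiv i F" "{..n}"]
    by (auto simp: frobenius_form_def)
  then obtain b where b: "b \<in> keys (mp_pderiv i F)" and u: "u = single i CARD('k) + b"
    using keys_mult[of "mp_var i ^ CARD('k)" "mp_pderiv i F"] by (auto simp: mp_var_power)
  have "keys u = keys (b + single i 1)"
    using card_UNIV_ge_2[where 'a = 'k] by (auto simp: u keys_add_monomial)
  moreover have "keys (b + single i 1) \<subseteq> I \<or> keys (b + single i 1) \<subseteq> J"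
    using assms keys_mp_pderiv[OF b] by (auto simp: separated_in_def)
  ultimately show "keys u \<subseteq> I \<or> keys u \<subseteq> J"
    by simp
qed

lemma lookup_eq_0_if_mixed:
  "separated_in I J F \<Longrightarrow> \<not> keys u \<subseteq> I \<Longrightarrow> \<not> keys u \<subseteq> J \<Longrightarrow> lookup F u = 0"
  by (auto simp: separated_in_def in_keys_iff)

lemma vars_in_if_no_pure_monomial:
  "separated_in I J F \<Longrightarrow> \<forall>h\<in>keys F. \<not> keys h \<subseteq> J \<Longrightarrow> vars_in I F"
  by (auto simp: separated_in_def vars_in_def)

lemma lookup_eq_0_outside_vars:
  fixes F :: "'k::comm_ring_1 mpoly"
  assumes "vars_in I F" "i \<notin> I" "d > 0"
  shows "lookup F (single i d) = 0" "lookup (mp_pderiv j F) (single i d) = 0"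
proof -
  have "lookup F u = 0" if "i \<in> keys u" for u
    using assms(1,2) that unfolding vars_in_def by (metis in_keys_iff subsetD)
  moreover have "i \<in> keys (single i d)" "i \<in> keys (single i d + single j 1)"
    using assms(3) by (auto simp: keys_add_monomial)
  ultimately show "lookup F (single i d) = 0" "lookup (mp_pderiv j F) (single i d) = 0"
    by (simp_all add: lookup_mp_pderiv)
qed

text \<open>Coefficientwise, a summand pure in \<open>I\<close> lies below \<open>m\<close> and one pure in \<open>J\<close> lies below
  \<open>h\<close>; the degrees rule out the first case and force equality in the second.\<close>

lemma pure_summand_unique:
  fixes a b m h :: "nat \<Rightarrow>\<^sub>0 nat"
  assumes disjoint: "I \<inter> J = {}" and m: "keys m \<subseteq> I" and h: "keys h \<subseteq> J"
    and a: "keys a \<subseteq> I \<or> keys a \<subseteq> J" and deg: "mon_deg m < mon_deg a" "mon_deg a = mon_deg h"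
    and sum: "a + b = m + h"
  shows "a = h"
proof -
  have le: "lookup a j \<le> lookup d j"
    if "keys a \<subseteq> K" "keys c \<inter> K = {}" "a + b = c + d" for K c d j
  proof (cases "j \<in> K")
    case True
    then have "lookup c j = 0" using that(2) by (auto simp: in_keys_iff)
    then show ?thesis using arg_cong[OF that(3), of "\<lambda>p. lookup p j"] by (simp add: lookup_add)
  next
    case False
    then have "j \<notin> keys a" using that(1) by blast
    then show ?thesis by (simp add: in_keys_iff)
  qed
  from a show ?thesis
  proof
    assume "keys a \<subseteq> I"
    then have "mon_deg m = mon_deg a + mon_deg (m - a)"
      using le[of I h m] h disjoint sum by (intro mon_deg_le_pointwise) (auto simp: add.commute)
    with deg(1) show ?thesis by simp
  next
    assume "keys a \<subseteq> J"
    then show ?thesis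
      using le[of J m h] m disjoint sum deg(2) by (intro eq_if_le_pointwise_and_mon_deg_eq) auto
  qed
qed

lemma lookup_frobenius_form:
  fixes F :: "'k::{finite,field} mpoly"
  assumes "i \<le> n"
  shows "lookup (frobenius_form n F) (single i (2 * CARD('k)) + single j 1) =
    lookup (mp_pderiv j F) (single i (CARD('k) + 1))"
proof -
  let ?q = "CARD('k)"
  define \<mu> where "\<mu> = single i (2 * ?q) + single j (1::nat)"
  have \<mu>: "\<mu> = single i ?q + (single i ?q + single j 1)"
    by (simp add: \<mu>_def mult_2 single_add add.assoc)
  have summand: "lookup (mp_var l ^ ?q * mp_pderiv l F) \<mu> =
      (if l = i then lookup (mp_pderiv i F) (single i ?q + single j 1) else 0)" for l
  proof (cases "l = i")
    case True
    have "\<exists>v. \<mu> = single l ?q + v" using \<mu> True by blast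
    then show ?thesis using True by (simp add: mp_var_power lookup_single_mult \<mu>)
  next
    case False
    have "\<not> (\<exists>v. \<mu> = single l ?q + v)"
    proof
      assume "\<exists>v. \<mu> = single l ?q + v"
      then have "lookup \<mu> l \<ge> ?q" by (auto simp: lookup_add)
      moreover have "lookup \<mu> l \<le> 1" using False by (simp add: \<mu>_def lookup_add lookup_single when_def)
      ultimately show False using card_UNIV_ge_2[where 'a = 'k] by simp
    qed
    then show ?thesis using False by (simp add: mp_var_power lookup_single_mult)
  qed
  have "lookup (frobenius_form n F) \<mu> = lookup (mp_pderiv i F) (single i ?q + single j 1)"
    using assms by (simp add: frobenius_form_def lookup_sum summand)
  also have "\<dots> = lookup (mp_pderiv j F) (single i (?q + 1))"
  proof -
    have "single i ?q + single j 1 + single i 1 = single i (?q + 1) + single j (1::nat)"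
      by (simp only: single_add add_ac)
    moreover have "of_nat (lookup (single i ?q + single j 1) i + 1) =
        (of_nat (lookup (single i (?q + 1)) j + 1) :: 'k)"
      by (cases "j = i") (simp_all add: lookup_add lookup_single when_def)
    ultimately show ?thesis
      by (simp only: lookup_mp_pderiv)
  qed
  finally show ?thesis
    by (simp add: \<mu>_def)
qed

locale separated_frobenius_nonclassical =
  fixes F L :: "'k::{finite,field} mpoly" and n :: nat and I J :: "nat set"
  assumes disjoint: "I \<inter> J = {}"
    and separated_F: "separated_in I J F"
    and homogeneous_F: "homogeneous (CARD('k) + 2) F"
    and cofactor: "frobenius_form n F = F * L"
begin

lemma swap: "separated_frobenius_nonclassical F L n J I"
  by unfold_locales
    (use disjoint separated_F homogeneous_F cofactor in \<open>auto simp: separated_in_commute\<close>)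

lemma mon_deg_keys: "u \<in> keys F \<Longrightarrow> mon_deg u = CARD('k) + 2"
  using homogeneous_F by (simp add: homogeneous_def)

text \<open>The mixed monomial \<open>m + h\<close> arises in \<open>F * L\<close> only as \<open>h * m\<close>, and it does not occur
  in the separated Frobenius form.\<close>

lemma lookup_cofactor_pure_eq_0:
  assumes h: "h \<in> keys F" "keys h \<subseteq> J" and m: "keys m \<subseteq> I" "mon_deg m = CARD('k) - 1"
  shows "lookup L m = 0"
proof -
  have "lookup (F * L) (m + h) = lookup F h * lookup L m"
  proof (rule lookup_mpoly_mult_unique)
    show "h + m = m + h" by (simp add: add.commute)
    fix a b assume ab: "a \<in> keys F" "b \<in> keys L" "a + b = m + h"
    have "a = h"
      using pure_summand_unique[OF disjoint m(1) h(2) _ _ _ ab(3)] separated_F ab(1)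
        mon_deg_keys[OF ab(1)] mon_deg_keys[OF h(1)] m(2)
      by (auto simp: separated_in_def)
    moreover from this ab(3) have "h + b = h + m" by (simp add: add.commute)
    ultimately show "a = h \<and> b = m" by simp
  qed
  moreover have "lookup (F * L) (m + h) = 0"
  proof -
    have "m \<noteq> 0" "h \<noteq> 0"
      using m(2) mon_deg_keys[OF h(1)] card_UNIV_ge_2[where 'a = 'k] by auto
    then obtain k l where "k \<in> keys m" "l \<in> keys h" by fastforce
    then have "\<not> keys (m + h) \<subseteq> I" "\<not> keys (m + h) \<subseteq> J"
      using m(1) h(2) disjoint by (auto simp: keys_add_monomial)
    then show ?thesis
      using lookup_eq_0_if_mixed[OF separated_in_frobenius_form[OF separated_F]] cofactor by metis
  qed
  ultimately show ?thesis
    using h(1) by (simp add: in_keys_iff)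
qed

lemma lookup_product_eq_0:
  assumes h: "h \<in> keys F" "keys h \<subseteq> J" and "i \<in> I" "j \<in> I"
  shows "lookup (F * L) (single i (2 * CARD('k)) + single j 1) = 0"
proof -
  let ?\<mu> = "single i (2 * CARD('k)) + single j 1"
  have "lookup F a * lookup L b = 0" if "a \<in> keys F" "a + b = ?\<mu>" for a b
  proof -
    have "keys b \<subseteq> I"
      using that(2) \<open>i \<in> I\<close> \<open>j \<in> I\<close> keys_add_monomial[of a b] by (auto simp: keys_add_monomial)
    moreover have "mon_deg b = CARD('k) - 1"
      using arg_cong[OF that(2), of mon_deg] mon_deg_keys[OF that(1)] by (simp add: mon_deg_add)
    ultimately show ?thesis
      using lookup_cofactor_pure_eq_0[OF h] by simp
  qed
  then show ?thesis
    by (auto simp: lookup_mpoly_mult when_def intro!: sum.neutral)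
qed

lemma lookup_mp_pderiv_pure_eq_0:
  assumes h: "h \<in> keys F" "keys h \<subseteq> J" and i: "i \<in> I" "i \<le> n"
  shows "lookup (mp_pderiv j F) (single i (CARD('k) + 1)) = 0"
proof (cases "j \<in> I")
  case True
  then show ?thesis
    using lookup_frobenius_form[OF i(2), of F j] lookup_product_eq_0[OF h i(1) True]
    by (simp add: cofactor)
next
  case False
  have "lookup F (single i (CARD('k) + 1) + single j 1) = 0"
  proof (rule lookup_eq_0_if_mixed[OF separated_F])
    show "\<not> keys (single i (CARD('k) + 1) + single j 1) \<subseteq> I"
      using False by (simp add: keys_add_monomial)
    show "\<not> keys (single i (CARD('k) + 1) + single j 1) \<subseteq> J"
      using i(1) disjoint by (auto simp: keys_add_monomial)
  qed
  then show ?thesis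
    by (simp add: lookup_mp_pderiv)
qed

end

lemma mp_eval_on_coordinate_line:
  fixes P :: "'k::field mpoly" and s t :: "'k alg_closure"
  assumes disjoint: "I \<inter> J = {}" and separated: "separated_in I J P"
    and hom: "homogeneous d P" "d > 0" and i: "i0 \<in> I" "i1 \<in> J"
  shows "mp_eval to_ac (\<lambda>i. if i = i0 then s else if i = i1 then t else 0) P =
    to_ac (lookup P (single i0 d)) * s ^ d + to_ac (lookup P (single i1 d)) * t ^ d"
proof -
  let ?p = "\<lambda>i. if i = i0 then s else if i = i1 then t else 0"
  have "i0 \<noteq> i1"
    using i disjoint by blast
  have "single i0 d \<noteq> single i1 d"
    using \<open>i0 \<noteq> i1\<close> hom(2) by (metis lookup_single_eq lookup_single_not_eq less_not_refl2)
  have "mon_eval ?p u = 0" if u: "u \<in> keys P" "u \<notin> {single i0 d, single i1 d}" for u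
  proof -
    have "\<exists>k\<in>keys u. k \<noteq> i0 \<and> k \<noteq> i1"
    proof (rule ccontr)
      assume "\<not> ?thesis"
      then have "keys u \<subseteq> {i0, i1}"
        by blast
      moreover have "i1 \<notin> I" "i0 \<notin> J"
        using i disjoint by blast+
      moreover have "keys u \<subseteq> I \<or> keys u \<subseteq> J"
        using separated u(1) by (auto simp: separated_in_def)
      ultimately have "keys u \<subseteq> {i0} \<or> keys u \<subseteq> {i1}"
        by blast
      moreover have "mon_deg u = d"
        using hom(1) u(1) by (simp add: homogeneous_def)
      ultimately have "u = single i0 d \<or> u = single i1 d"
        using monomial_eq_single_if_keys_subset[of u i0] monomial_eq_single_if_keys_subset[of u i1]
        by auto
      with u(2) show False
        by simp
    qed
    then show ?thesis
      by (auto intro: mon_eval_eq_0)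
  qed
  then have "mp_eval to_ac ?p P = (\<Sum>u\<in>{single i0 d, single i1 d}. to_ac (lookup P u) * mon_eval ?p u)"
    by (intro to_ac.mp_eval_concentrated) auto
  also have "\<dots> = to_ac (lookup P (single i0 d)) * s ^ d + to_ac (lookup P (single i1 d)) * t ^ d"
    using \<open>single i0 d \<noteq> single i1 d\<close> \<open>i0 \<noteq> i1\<close> by simp
  finally show ?thesis .
qed

lemma binary_form_nontrivial_zero:
  fixes a b :: "'a::alg_closed_field"
  assumes "N > 0"
  shows "\<exists>s t. (s \<noteq> 0 \<or> t \<noteq> 0) \<and> a * s ^ N + b * t ^ N = 0"
proof (cases "b = 0")
  case True
  then show ?thesis
    using assms by (intro exI[of _ 0] exI[of _ 1]) simp
next
  case False
  then have "degree (monom b N + [:a:]) = N"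
    using assms by (simp add: degree_add_eq_left degree_monom_eq)
  then obtain t where "poly (monom b N + [:a:]) t = 0"
    using alg_closed_imp_poly_has_root[of "monom b N + [:a:]"] assms by auto
  then show ?thesis
    by (intro exI[of _ 1] exI[of _ t]) (simp add: poly_monom add.commute)
qed

lemma singular_point_on_coordinate_line:
  fixes F :: "'k::field mpoly"
  assumes "m < n" and separated: "separated_in {..m} {m<..n} F"
    and homogeneous_F: "homogeneous (d + 1) F" "d > 0" and "s \<noteq> 0 \<or> t \<noteq> 0"
    and "to_ac (lookup F (single 0 (d + 1))) * s ^ (d + 1) +
      to_ac (lookup F (single n (d + 1))) * t ^ (d + 1) = 0"
    and "\<forall>j. to_ac (lookup (mp_pderiv j F) (single 0 d)) * s ^ d +
      to_ac (lookup (mp_pderiv j F) (single n d)) * t ^ d = 0"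
  shows "singular_point n F (\<lambda>i. if i = 0 then s else if i = n then t else 0)"
proof -
  have ends: "0 \<in> {..m}" "n \<in> {m<..n}" "{..m} \<inter> {m<..n} = {}"
    using \<open>m < n\<close> by auto
  have "mp_eval to_ac (\<lambda>i. if i = 0 then s else if i = n then t else 0) F =
      to_ac (lookup F (single 0 (d + 1))) * s ^ (d + 1) + to_ac (lookup F (single n (d + 1))) * t ^ (d + 1)"
    using ends separated homogeneous_F by (intro mp_eval_on_coordinate_line) auto
  moreover have "mp_eval to_ac (\<lambda>i. if i = 0 then s else if i = n then t else 0) (mp_pderiv j F) =
      to_ac (lookup (mp_pderiv j F) (single 0 d)) * s ^ d +
      to_ac (lookup (mp_pderiv j F) (single n d)) * t ^ d" for j
    using ends separated_in_mp_pderiv[OF separated] homogeneous_mp_pderiv[OF homogeneous_F(1)]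
      homogeneous_F(2)
    by (intro mp_eval_on_coordinate_line) auto
  moreover have "\<exists>i\<le>n. (if i = 0 then s else if i = n then t else 0) \<noteq> 0"
    using assms(5) \<open>m < n\<close> by auto
  ultimately show ?thesis
    using assms(6,7) by (simp add: singular_point_def)
qed

lemma separated_frobenius_nonclassical_singular_point:
  fixes F :: "'k::{finite,field} mpoly"
  assumes "m < n" and separated: "separated_in {..m} {m<..n} F"
    and homogeneous_F: "homogeneous (CARD('k) + 2) F" and "frobenius_nonclassical n F"
  shows "\<exists>y. singular_point n F y"
proof -
  let ?q = "CARD('k)" and ?I = "{..m}" and ?J = "{m<..n}"
  obtain L where "frobenius_form n F = F * L"
    using assms(4) by (auto simp: frobenius_nonclassical_iff_dvd)
  then interpret separated_frobenius_nonclassical F L n ?I ?J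
    by unfold_locales (use separated homogeneous_F in auto)
  interpret swapped: separated_frobenius_nonclassical F L n ?J ?I
    by (rule swap)
  define a b where "a = lookup F (single 0 (?q + 2))" and "b = lookup F (single n (?q + 2))"
  define \<alpha> \<beta> where "\<alpha> j = lookup (mp_pderiv j F) (single 0 (?q + 1))"
    and "\<beta> j = lookup (mp_pderiv j F) (single n (?q + 1))" for j
  have line: "singular_point n F (\<lambda>i. if i = 0 then s else if i = n then t else 0)"
    if "s \<noteq> 0 \<or> t \<noteq> 0" "to_ac a * s ^ (?q + 2) + to_ac b * t ^ (?q + 2) = 0"
      "\<forall>j. to_ac (\<alpha> j) * s ^ (?q + 1) + to_ac (\<beta> j) * t ^ (?q + 1) = 0" for s t
    using singular_point_on_coordinate_line[OF \<open>m < n\<close> separated, of "?q + 1"] homogeneous_F that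
    by (simp add: a_def b_def \<alpha>_def \<beta>_def)
  show ?thesis
  proof (cases "\<exists>h\<in>keys F. keys h \<subseteq> ?J")
    case False
    then have "vars_in ?I F"
      using vars_in_if_no_pure_monomial[OF separated] by blast
    then have "b = 0" "\<forall>j. \<beta> j = 0"
      using lookup_eq_0_outside_vars[of ?I F n] \<open>m < n\<close> by (auto simp: b_def \<beta>_def)
    then have "singular_point n F (\<lambda>i. if i = 0 then 0 else if i = n then 1 else 0)"
      by (intro line) simp_all
    then show ?thesis by blast
  next
    case True
    then obtain h where h: "h \<in> keys F" "keys h \<subseteq> ?J" by blast
    show ?thesis
    proof (cases "\<exists>g\<in>keys F. keys g \<subseteq> ?I")
      case False
      then have "vars_in ?J F"
        using vars_in_if_no_pure_monomial separated separated_in_commute by blast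
      then have "a = 0" "\<forall>j. \<alpha> j = 0"
        using lookup_eq_0_outside_vars[of ?J F 0] by (auto simp: a_def \<alpha>_def)
      then have "singular_point n F (\<lambda>i. if i = 0 then 1 else if i = n then 0 else 0)"
        by (intro line) simp_all
      then show ?thesis by blast
    next
      case True
      then obtain g where g: "g \<in> keys F" "keys g \<subseteq> ?I" by blast
      have "\<alpha> j = 0" "\<beta> j = 0" for j
        unfolding \<alpha>_def \<beta>_def using \<open>m < n\<close>
        by (intro lookup_mp_pderiv_pure_eq_0[OF h] swapped.lookup_mp_pderiv_pure_eq_0[OF g]; simp)+
      moreover obtain s t where "s \<noteq> 0 \<or> t \<noteq> 0" "to_ac a * s ^ (?q + 2) + to_ac b * t ^ (?q + 2) = 0"
        using binary_form_nontrivial_zero[where N = "?q + 2" and a = "to_ac a" and b = "to_ac b"]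
        by auto
      ultimately have "singular_point n F (\<lambda>i. if i = 0 then s else if i = n then t else 0)"
        by (intro line) simp_all
      then show ?thesis by blast
    qed
  qed
qed

theorem lemma5p1:
  fixes F :: "'k::{finite,field} mpoly" and n :: nat
  assumes "n \<ge> 2"
    and "vars_in {..n} F"
    and "F \<noteq> 0"
    and "homogeneous (card (UNIV :: 'k set) + 2) F"
    and "smooth_hypersurface n F"
    and "frobenius_nonclassical n F"
  shows "\<not> separated_variables n F"
proof
  assume "separated_variables n F"
  then obtain A m G H where A: "Defs.invertible_mat n A" and "m < n"
    and "vars_in {..m} G" "vars_in {m<..n} H" and "lin_change n A F = G + H"
    unfolding separated_variables_def by blast
  then have "separated_in {..m} {m<..n} (lin_change n A F)"
    by (simp add: separated_in_add)
  moreover have "homogeneous (CARD('k) + 2) (lin_change n A F)"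
    using assms(4) by (rule homogeneous_lin_change)
  moreover have "frobenius_nonclassical n (lin_change n A F)"
    using assms(2,6) by (rule frobenius_nonclassical_lin_change)
  ultimately obtain y where "singular_point n (lin_change n A F) y"
    using separated_frobenius_nonclassical_singular_point \<open>m < n\<close> by blast
  then have "singular_point n F (\<lambda>i. \<Sum>j\<le>n. to_ac (A i j) * y j)"
    using assms(2) A by (intro singular_point_lin_change)
  with assms(5) show False
    by (auto simp: smooth_hypersurface_iff)
qed

end
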